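(* Let $k$ be a field, let $A$ be a finite-dimensional (associative, unital) $k$-algebra, and let $(\Omega A,d)$ be a differential graded algebra with $\Omega^0A=A$ such that $\Omega^1A$ is finite-dimensional over $k$. Put $C=\mathrm{Hom}_k(A,k)$ (the dual coalgebra), $L=\mathrm{Hom}_k(\Omega^1A,k)$ and $\lambda=\mathrm{Hom}_k(d,k):L\to C$, $l\mapsto l\circ d$. Let $M$ be a right $A$-module, regarded as a left $C$-comodule via ${}^M\!\varrho(m)=\sum_s c^s\otimes m a^s$. Let $\Upsilon: L\Box_C M\to \mathrm{Hom}_A(\Omega^1A,M)$, $\Upsilon(\sum_i l_i\otimes m_i)(\omega)=\sum_i l_i(\omega)m_i$ (this is a linear isomorphism). Then the assignment $\nabla_0\mapsto -\nabla_0\circ\Upsilon$ is a bijection from the set of hom-connections $\nabla_0:\mathrm{Hom}_A(\Omega^1A,M)\to M$ onto the set of connections $\bar\nabla: L\Box_C M\to M$ in the left $C$-comodule $M$ with respect to $\lambda$.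
   Context: All algebras are associative and unital over the field $k$; $\otimes$ is over $k$. A differential graded algebra $\Omega A=\bigoplus_{n\ge0}\Omega^nA$ over $A=\Omega^0A$ has a degree-one differential $d$ with $d^2=0$ satisfying the graded Leibniz rule. For a right $A$-module $M$, $\mathrm{Hom}_A(\Omega^1A,M)$ denotes right $A$-linear maps, and it is a right $A$-module via $(fa)(\omega)=f(a\omega)$. A (right) hom-connection on $M$ is a $k$-linear map $\nabla_0:\mathrm{Hom}_A(\Omega^1A,M)\to M$ with $\nabla_0(fa)=\nabla_0(f)a+f(da)$ for all $f$ and $a\in A$. Fix a basis $\{a^s\}$ of $A$ and the dual basis $\{c^s\}$ of $C$. $L$ is an $A$-bimodule by $(alb)(\omega)=l(b\omega a)$, and a $C$-bicomodule with left coaction $l\mapsto\sum_s c^s\otimes la^s$ and right coaction $l\mapsto \sum_s a^sl\otimes c^s$. The cotensor product is $L\Box_C M=\{\sum_i l_i\otimes m_i\in L\otimes M : \sum_{i,s}a^sl_i\otimes c^s\otimes m_i=\sum_{i,s}l_i\otimes c^s\otimes m_ia^s\}$. A connection in the left $C$-comodule $M$ with respect to $\lambda$ is a $k$-linear map $\bar\nabla:L\Box_CM\to M$ such that for all $\sum_i l_i\otimes m_i\in L\Box_C M$: ${}^M\!\varrho\big(\bar\nabla(\sum_i l_i\otimes m_i)\big)=\sum_s c^s\otimes\bar\nabla(\sum_i l_ia^s\otimes m_i)+\sum_i\lambda(l_i)\otimes m_i$ in $C\otimes M$. *)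

theory Defs
  imports Complex_Main "HOL-Library.Function_Algebras"
begin

definition k_algebra :: "('k::field \<Rightarrow> 'a::ring_1 \<Rightarrow> 'a) \<Rightarrow> bool" where
  "k_algebra sA \<longleftrightarrow> vector_space sA \<and>
     (\<forall>c x y. sA c (x * y) = sA c x * y \<and> sA c (x * y) = x * sA c y)"

text \<open>Degree 0 and 1 part of a DGA with Omega^0 A = A: an A-bimodule Omega^1 A (k-vector space,
  compatible actions) and a k-linear map d : A -> Omega^1 A satisfying the Leibniz rule.\<close>
definition dga01 ::
  "('k::field \<Rightarrow> 'a::ring_1 \<Rightarrow> 'a) \<Rightarrow> ('k \<Rightarrow> 'w::ab_group_add \<Rightarrow> 'w) \<Rightarrow>
   ('a \<Rightarrow> 'w \<Rightarrow> 'w) \<Rightarrow> ('w \<Rightarrow> 'a \<Rightarrow> 'w) \<Rightarrow> ('a \<Rightarrow> 'w) \<Rightarrow> bool" where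
  "dga01 sA sW lm rm d \<longleftrightarrow> vector_space sW \<and>
     (\<forall>a b w. lm (a + b) w = lm a w + lm b w) \<and>
     (\<forall>a w w'. lm a (w + w') = lm a w + lm a w') \<and>
     (\<forall>a b w. lm (a * b) w = lm a (lm b w)) \<and>
     (\<forall>w. lm 1 w = w) \<and>
     (\<forall>a b w. rm w (a + b) = rm w a + rm w b) \<and>
     (\<forall>a w w'. rm (w + w') a = rm w a + rm w' a) \<and>
     (\<forall>a b w. rm w (a * b) = rm (rm w a) b) \<and>
     (\<forall>w. rm w 1 = w) \<and>
     (\<forall>a b w. lm a (rm w b) = rm (lm a w) b) \<and>
     (\<forall>c a w. lm (sA c a) w = sW c (lm a w) \<and> lm a (sW c w) = sW c (lm a w)) \<and>
     (\<forall>c a w. rm w (sA c a) = sW c (rm w a) \<and> rm (sW c w) a = sW c (rm w a)) \<and>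
     (\<forall>a b. d (a + b) = d a + d b) \<and>
     (\<forall>c a. d (sA c a) = sW c (d a)) \<and>
     (\<forall>a b. d (a * b) = rm (d a) b + lm a (d b))"

definition right_module ::
  "('k::field \<Rightarrow> 'a::ring_1 \<Rightarrow> 'a) \<Rightarrow> ('k \<Rightarrow> 'm::ab_group_add \<Rightarrow> 'm) \<Rightarrow> ('m \<Rightarrow> 'a \<Rightarrow> 'm) \<Rightarrow> bool" where
  "right_module sA sM act \<longleftrightarrow> vector_space sM \<and>
     (\<forall>m m' a. act (m + m') a = act m a + act m' a) \<and>
     (\<forall>m a b. act m (a + b) = act m a + act m b) \<and>
     (\<forall>m a b. act m (a * b) = act (act m a) b) \<and>
     (\<forall>m. act m 1 = m) \<and>
     (\<forall>c m a. act (sM c m) a = sM c (act m a) \<and> act m (sA c a) = sM c (act m a))"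

text \<open>A (finite) basis of A, given as a list, and its dual basis of C = Hom_k(A,k).\<close>
definition basis_list :: "('k::field \<Rightarrow> 'a::ab_group_add \<Rightarrow> 'a) \<Rightarrow> 'a list \<Rightarrow> bool" where
  "basis_list sA as \<longleftrightarrow> distinct as \<and> \<not> module.dependent sA (set as) \<and>
     module.span sA (set as) = UNIV"

definition k_lin_fun :: "('k::field \<Rightarrow> 'v::ab_group_add \<Rightarrow> 'v) \<Rightarrow> ('v \<Rightarrow> 'k) \<Rightarrow> bool" where
  "k_lin_fun sV l \<longleftrightarrow> (\<forall>x y. l (x + y) = l x + l y) \<and> (\<forall>c x. l (sV c x) = c * l x)"

definition dual_basis :: "('k::field \<Rightarrow> 'a::ab_group_add \<Rightarrow> 'a) \<Rightarrow> 'a list \<Rightarrow> ('a \<Rightarrow> 'k) list \<Rightarrow> bool" where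
  "dual_basis sA as cs \<longleftrightarrow> length cs = length as \<and> (\<forall>c\<in>set cs. k_lin_fun sA c) \<and>
     (\<forall>i<length as. \<forall>j<length as. (cs ! i) (as ! j) = (if i = j then 1 else 0))"

definition fscale :: "'k::field \<Rightarrow> ('v \<Rightarrow> 'k) \<Rightarrow> ('v \<Rightarrow> 'k)" where
  "fscale c l = (\<lambda>x. c * l x)"

definition pt :: "'p \<Rightarrow> 'p \<Rightarrow> 'k::field" where
  "pt p = (\<lambda>q. if q = p then 1 else 0)"

definition lin_combs :: "('x \<Rightarrow> 'k::field) set \<Rightarrow> ('x \<Rightarrow> 'k) set" where
  "lin_combs R = {f. \<exists>gs :: ('k \<times> ('x \<Rightarrow> 'k)) list. set (map snd gs) \<subseteq> R \<and>
                       f = (\<lambda>x. sum_list (map (\<lambda>(c, g). c * g x) gs))}"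

text \<open>A formal expression sum_i c_i (v_i (x) w_i), as an element of the free vector space on V x W.\<close>
definition formal2 :: "('k::field \<times> 'v \<times> 'w) list \<Rightarrow> ('v \<times> 'w \<Rightarrow> 'k)" where
  "formal2 xs = (\<lambda>p. sum_list (map (\<lambda>(c, v, w). c * pt (v, w) p) xs))"

definition bil_rels :: "('k::field \<Rightarrow> 'v::ab_group_add \<Rightarrow> 'v) \<Rightarrow> ('k \<Rightarrow> 'w::ab_group_add \<Rightarrow> 'w)
    \<Rightarrow> ('v \<times> 'w \<Rightarrow> 'k) set" where
  "bil_rels sV sW =
     {(\<lambda>q. pt (v + v', w) q - pt (v, w) q - pt (v', w) q) | v v' w. True} \<union>
     {(\<lambda>q. pt (v, w + w') q - pt (v, w) q - pt (v, w') q) | v w w'. True} \<union>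
     {(\<lambda>q. pt (sV c v, w) q - c * pt (v, w) q) | c v w. True} \<union>
     {(\<lambda>q. pt (v, sW c w) q - c * pt (v, w) q) | c v w. True}"

definition tensor2_zero :: "('k::field \<Rightarrow> 'v::ab_group_add \<Rightarrow> 'v) \<Rightarrow> ('k \<Rightarrow> 'w::ab_group_add \<Rightarrow> 'w)
    \<Rightarrow> ('k \<times> 'v \<times> 'w) list \<Rightarrow> bool" where
  "tensor2_zero sV sW xs \<longleftrightarrow> formal2 xs \<in> lin_combs (bil_rels sV sW)"

definition formal3 :: "('k::field \<times> 'u \<times> 'v \<times> 'w) list \<Rightarrow> ('u \<times> 'v \<times> 'w \<Rightarrow> 'k)" where
  "formal3 xs = (\<lambda>p. sum_list (map (\<lambda>(c, u, v, w). c * pt (u, v, w) p) xs))"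

definition tril_rels :: "('k::field \<Rightarrow> 'u::ab_group_add \<Rightarrow> 'u) \<Rightarrow> ('k \<Rightarrow> 'v::ab_group_add \<Rightarrow> 'v)
    \<Rightarrow> ('k \<Rightarrow> 'w::ab_group_add \<Rightarrow> 'w) \<Rightarrow> ('u \<times> 'v \<times> 'w \<Rightarrow> 'k) set" where
  "tril_rels sU sV sW =
     {(\<lambda>q. pt (u + u', v, w) q - pt (u, v, w) q - pt (u', v, w) q) | u u' v w. True} \<union>
     {(\<lambda>q. pt (u, v + v', w) q - pt (u, v, w) q - pt (u, v', w) q) | u v v' w. True} \<union>
     {(\<lambda>q. pt (u, v, w + w') q - pt (u, v, w) q - pt (u, v, w') q) | u v w w'. True} \<union>
     {(\<lambda>q. pt (sU c u, v, w) q - c * pt (u, v, w) q) | c u v w. True} \<union>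
     {(\<lambda>q. pt (u, sV c v, w) q - c * pt (u, v, w) q) | c u v w. True} \<union>
     {(\<lambda>q. pt (u, v, sW c w) q - c * pt (u, v, w) q) | c u v w. True}"

definition tensor3_zero :: "('k::field \<Rightarrow> 'u::ab_group_add \<Rightarrow> 'u) \<Rightarrow> ('k \<Rightarrow> 'v::ab_group_add \<Rightarrow> 'v)
    \<Rightarrow> ('k \<Rightarrow> 'w::ab_group_add \<Rightarrow> 'w) \<Rightarrow> ('k \<times> 'u \<times> 'v \<times> 'w) list \<Rightarrow> bool" where
  "tensor3_zero sU sV sW xs \<longleftrightarrow> formal3 xs \<in> lin_combs (tril_rels sU sV sW)"

text \<open>Elements of L \<otimes> M are represented by lists [(l_i, m_i)] (meaning sum_i l_i \<otimes> m_i), with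
  L = Hom_k(Omega^1 A, k).  The list lies in L \<box>_C M iff all l_i are k-linear and
  sum_{i,s} a^s l_i \<otimes> c^s \<otimes> m_i - sum_{i,s} l_i \<otimes> c^s \<otimes> m_i a^s = 0 in L \<otimes> C \<otimes> M,
  where (a l)(w) = l(w a) and (l a)(w) = l(a w).\<close>
definition cotensor ::
  "('k::field \<Rightarrow> 'w::ab_group_add \<Rightarrow> 'w) \<Rightarrow> ('w \<Rightarrow> 'a \<Rightarrow> 'w) \<Rightarrow> ('k \<Rightarrow> 'm::ab_group_add \<Rightarrow> 'm)
    \<Rightarrow> ('m \<Rightarrow> 'a \<Rightarrow> 'm) \<Rightarrow> 'a list \<Rightarrow> ('a \<Rightarrow> 'k) list \<Rightarrow> (('w \<Rightarrow> 'k) \<times> 'm) list set" where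
  "cotensor sW rm sM act as cs =
     {xs. (\<forall>(l, m)\<in>set xs. k_lin_fun sW l) \<and>
          tensor3_zero fscale fscale sM
            ([(1, (\<lambda>w. l (rm w a)), c, m). (l, m) \<leftarrow> xs, (a, c) \<leftarrow> zip as cs] @
             [(-1, l, c, act m a). (l, m) \<leftarrow> xs, (a, c) \<leftarrow> zip as cs])}"

definition homA :: "('w \<Rightarrow> 'a \<Rightarrow> 'w::ab_group_add) \<Rightarrow> ('m::ab_group_add \<Rightarrow> 'a \<Rightarrow> 'm) \<Rightarrow> ('w \<Rightarrow> 'm) set" where
  "homA rm act = {f. (\<forall>x y. f (x + y) = f x + f y) \<and> (\<forall>x a. f (rm x a) = act (f x) a)}"

text \<open>Hom-connections; values outside Hom_A(Omega^1 A, M) are normalised to 0.\<close>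
definition hom_connections ::
  "('a::ring_1 \<Rightarrow> 'w::ab_group_add \<Rightarrow> 'w) \<Rightarrow> ('w \<Rightarrow> 'a \<Rightarrow> 'w) \<Rightarrow> ('a \<Rightarrow> 'w)
    \<Rightarrow> ('k::field \<Rightarrow> 'm::ab_group_add \<Rightarrow> 'm) \<Rightarrow> ('m \<Rightarrow> 'a \<Rightarrow> 'm) \<Rightarrow> (('w \<Rightarrow> 'm) \<Rightarrow> 'm) set" where
  "hom_connections lm rm d sM act =
     {N0. (\<forall>f\<in>homA rm act. \<forall>g\<in>homA rm act. N0 (\<lambda>w. f w + g w) = N0 f + N0 g) \<and>
          (\<forall>c. \<forall>f\<in>homA rm act. N0 (\<lambda>w. sM c (f w)) = sM c (N0 f)) \<and>
          (\<forall>f\<in>homA rm act. \<forall>a. N0 (\<lambda>w. f (lm a w)) = act (N0 f) a + f (d a)) \<and>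
          (\<forall>f. f \<notin> homA rm act \<longrightarrow> N0 f = 0)}"

text \<open>Connections in the left C-comodule M w.r.t. lambda = (l \<mapsto> l \<circ> d): k-linear maps on
  L \<box>_C M (well defined on tensors), values outside the representatives normalised to 0.\<close>
definition comodule_connections ::
  "('a::ring_1 \<Rightarrow> 'w::ab_group_add \<Rightarrow> 'w) \<Rightarrow> ('w \<Rightarrow> 'a \<Rightarrow> 'w) \<Rightarrow> ('a \<Rightarrow> 'w)
    \<Rightarrow> ('k::field \<Rightarrow> 'w \<Rightarrow> 'w) \<Rightarrow> ('k \<Rightarrow> 'm::ab_group_add \<Rightarrow> 'm) \<Rightarrow> ('m \<Rightarrow> 'a \<Rightarrow> 'm)
    \<Rightarrow> 'a list \<Rightarrow> ('a \<Rightarrow> 'k) list \<Rightarrow> ((('w \<Rightarrow> 'k) \<times> 'm) list \<Rightarrow> 'm) set" where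
  "comodule_connections lm rm d sW sM act as cs =
     {N. (\<forall>xs\<in>cotensor sW rm sM act as cs. \<forall>ys\<in>cotensor sW rm sM act as cs.
            tensor2_zero fscale sM ([(1, l, m). (l, m) \<leftarrow> xs] @ [(-1, l, m). (l, m) \<leftarrow> ys])
            \<longrightarrow> N xs = N ys) \<and>
         (\<forall>xs\<in>cotensor sW rm sM act as cs. \<forall>ys\<in>cotensor sW rm sM act as cs.
            N (xs @ ys) = N xs + N ys) \<and>
         (\<forall>c. \<forall>xs\<in>cotensor sW rm sM act as cs. N (map (\<lambda>(l, m). (l, sM c m)) xs) = sM c (N xs)) \<and>
         (\<forall>xs\<in>cotensor sW rm sM act as cs.
            tensor2_zero fscale sM
              ([(1, c, act (N xs) a). (a, c) \<leftarrow> zip as cs] @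
               [(-1, c, N (map (\<lambda>(l, m). (\<lambda>w. l (lm a w), m)) xs)). (a, c) \<leftarrow> zip as cs] @
               [(-1, (\<lambda>x. l (d x)), m). (l, m) \<leftarrow> xs])) \<and>
         (\<forall>xs. xs \<notin> cotensor sW rm sM act as cs \<longrightarrow> N xs = 0)}"

definition Upsilon :: "('k::field \<Rightarrow> 'm::ab_group_add \<Rightarrow> 'm) \<Rightarrow> (('w \<Rightarrow> 'k) \<times> 'm) list \<Rightarrow> 'w \<Rightarrow> 'm" where
  "Upsilon sM xs = (\<lambda>w. sum_list (map (\<lambda>(l, m). sM (l w) m) xs))"

definition hom_to_conn ::
  "('k::field \<Rightarrow> 'w::ab_group_add \<Rightarrow> 'w) \<Rightarrow> ('w \<Rightarrow> 'a \<Rightarrow> 'w) \<Rightarrow> ('k \<Rightarrow> 'm::ab_group_add \<Rightarrow> 'm)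
    \<Rightarrow> ('m \<Rightarrow> 'a \<Rightarrow> 'm) \<Rightarrow> 'a list \<Rightarrow> ('a \<Rightarrow> 'k) list \<Rightarrow> (('w \<Rightarrow> 'm) \<Rightarrow> 'm)
    \<Rightarrow> ((('w \<Rightarrow> 'k) \<times> 'm) list \<Rightarrow> 'm)" where
  "hom_to_conn sW rm sM act as cs N0 =
     (\<lambda>xs. if xs \<in> cotensor sW rm sM act as cs then - N0 (Upsilon sM xs) else 0)"

end

theory Submission
  imports Defs
begin

text \<open>Since \<open>\<Omega>\<^sup>1A\<close> is finite-dimensional, expanding the first factor of a tensor
  \<open>x \<in> L \<otimes> M\<close> along the dual basis \<open>e\<^sup>j\<close> of a basis \<open>w\<^sub>j\<close> of \<open>\<Omega>\<^sup>1A\<close> brings it to the normal form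
  \<open>\<Sum>\<^sub>j e\<^sup>j \<otimes> \<Upsilon>(x)(w\<^sub>j)\<close>, while evaluation at \<open>\<omega>\<close> is bilinear; hence \<open>\<Upsilon>\<close> identifies
  \<open>L \<otimes> M\<close> with \<open>Hom\<^sub>k(\<Omega>\<^sup>1A, M)\<close>. Both halves of the cotensor condition have normal forms
  \<open>\<Sum>\<^sub>i\<^sub>,\<^sub>j e\<^sup>j \<otimes> c\<^sup>i \<otimes> \<dots>\<close>, and comparing them (or evaluating them against \<open>\<omega> \<otimes> a\<close>) shows
  that \<open>x \<in> L \<box>\<^sub>C M\<close> exactly when \<open>\<Upsilon>(x)\<close> is right \<open>A\<close>-linear. Evaluating the connection
  condition in \<open>C \<otimes> M\<close> at \<open>a \<in> A\<close> turns it into \<open>\<nabla>(x a) = \<nabla>(x) a - \<Upsilon>(x)(d a)\<close>, which for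
  \<open>\<nabla> = -\<nabla>\<^sub>0 \<circ> \<Upsilon>\<close> is the Leibniz rule of \<open>\<nabla>\<^sub>0\<close>; the inverse assignment is
  \<open>\<nabla>\<^sub>0 = -\<nabla> \<circ> \<Upsilon>\<^sup>-\<^sup>1\<close>.\<close>

lemma sum_list_apply: "(\<Sum>x\<leftarrow>xs. F x) y = (\<Sum>x\<leftarrow>xs. (F x y :: 'b::monoid_add))"
  by (induction xs) auto

lemma sum_list_sum_swap:
  "(\<Sum>x\<leftarrow>xs. \<Sum>j\<in>A. f x j) = (\<Sum>j\<in>A. \<Sum>x\<leftarrow>xs. (f x j :: 'b::comm_monoid_add))"
  by (induction xs) (auto simp: sum.distrib)

lemma sum_list_concat: "sum_list (concat xss) = sum_list (map sum_list (xss :: 'a::monoid_add list list))"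
  by (induction xss) auto

lemma sum_list_negf: "(\<Sum>x\<leftarrow>xs. - f x) = - (\<Sum>x\<leftarrow>xs. (f x :: 'b::ab_group_add))"
  by (induction xs) auto

lemma sum_list_cong: "(\<And>x. x \<in> set xs \<Longrightarrow> f x = g x) \<Longrightarrow> (\<Sum>x\<leftarrow>xs. f x) = (\<Sum>x\<leftarrow>xs. g x)"
  by (induction xs) auto

lemma sum_list_zip_nth:
  "length as = length cs \<Longrightarrow> sum_list (map g (zip as cs)) = (\<Sum>i<length as. (g (as ! i, cs ! i) :: 'b::comm_monoid_add))"
  by (simp add: sum_list_sum_nth atLeast0LessThan)

section \<open>Free vector spaces modulo relations\<close>

lemma lin_combs_zero: "(\<lambda>q. 0) \<in> lin_combs R"
  unfolding lin_combs_def by (intro CollectI exI[of _ "[]"]) simp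

lemma lin_combs_add:
  assumes "f \<in> lin_combs R" "g \<in> lin_combs R"
  shows "(\<lambda>q. f q + g q) \<in> lin_combs R"
proof -
  obtain fs where "set (map snd fs) \<subseteq> R" "f = (\<lambda>x. \<Sum>(c, h)\<leftarrow>fs. c * h x)"
    using assms(1) unfolding lin_combs_def by blast
  moreover obtain gs where "set (map snd gs) \<subseteq> R" "g = (\<lambda>x. \<Sum>(c, h)\<leftarrow>gs. c * h x)"
    using assms(2) unfolding lin_combs_def by blast
  ultimately show ?thesis
    unfolding lin_combs_def by (intro CollectI exI[of _ "fs @ gs"]) auto
qed

lemma lin_combs_scale:
  assumes "f \<in> lin_combs R"
  shows "(\<lambda>q. c * f q) \<in> lin_combs R"
proof -
  obtain fs where fs: "set (map snd fs) \<subseteq> R" "f = (\<lambda>x. \<Sum>(c, h)\<leftarrow>fs. c * h x)"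
    using assms unfolding lin_combs_def by blast
  let ?cfs = "map (\<lambda>(e, h). (c * e, h)) fs"
  have "(\<lambda>x. c * f x) = (\<lambda>x. \<Sum>(c, h)\<leftarrow>?cfs. c * h x)"
    unfolding fs(2) by (rule ext, induction fs) (auto simp: algebra_simps)
  then show ?thesis
    unfolding lin_combs_def using fs(1) by (intro CollectI exI[of _ ?cfs]) (auto simp: case_prod_beta)
qed

lemma lin_combs_base: "r \<in> R \<Longrightarrow> r \<in> lin_combs R"
  unfolding lin_combs_def by (intro CollectI exI[of _ "[(1, r)]"]) auto

definition cong_rels :: "('p \<Rightarrow> 'k::field) set \<Rightarrow> ('p \<Rightarrow> 'k) \<Rightarrow> ('p \<Rightarrow> 'k) \<Rightarrow> bool" where
  "cong_rels R f g \<longleftrightarrow> (\<lambda>q. f q - g q) \<in> lin_combs R"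

lemma cong_rels_refl: "cong_rels R f f"
  unfolding cong_rels_def using lin_combs_zero by simp

lemma cong_rels_ext: "(\<And>q. f q = g q) \<Longrightarrow> cong_rels R f g"
  using cong_rels_refl[of R f] by (metis ext)

lemma cong_rels_sym: "cong_rels R f g \<Longrightarrow> cong_rels R g f"
  unfolding cong_rels_def by (drule lin_combs_scale[where c = "-1"]) simp

lemma cong_rels_trans [trans]: "cong_rels R f g \<Longrightarrow> cong_rels R g h \<Longrightarrow> cong_rels R f h"
  unfolding cong_rels_def by (drule (1) lin_combs_add) simp

lemma cong_rels_add:
  "cong_rels R f g \<Longrightarrow> cong_rels R f' g' \<Longrightarrow> cong_rels R (\<lambda>q. f q + f' q) (\<lambda>q. g q + g' q)"
  unfolding cong_rels_def by (drule (1) lin_combs_add) (simp add: algebra_simps)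

lemma cong_rels_sum_list:
  "(\<And>x. x \<in> set xs \<Longrightarrow> cong_rels R (F x) (G x)) \<Longrightarrow>
   cong_rels R (\<lambda>q. \<Sum>x\<leftarrow>xs. F x q) (\<lambda>q. \<Sum>x\<leftarrow>xs. G x q)"
  by (induction xs) (simp_all add: cong_rels_refl cong_rels_add)

lemma cong_rels_sum:
  "(\<And>x. x \<in> A \<Longrightarrow> cong_rels R (F x) (G x)) \<Longrightarrow>
   cong_rels R (\<lambda>q. \<Sum>x\<in>A. F x q) (\<lambda>q. \<Sum>x\<in>A. G x q)"
  by (induction A rule: infinite_finite_induct) (simp_all add: cong_rels_refl cong_rels_add)

text \<open>\<open>\<pi> u r\<close> is the position with entry \<open>u\<close> in one tensor factor and remaining entries \<open>r\<close>.\<close>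
definition linear_slot ::
  "('p \<Rightarrow> 'k::field) set \<Rightarrow> ('k \<Rightarrow> 'u::ab_group_add \<Rightarrow> 'u) \<Rightarrow> ('u \<Rightarrow> 'r \<Rightarrow> 'p) \<Rightarrow> bool" where
  "linear_slot R sU \<pi> \<longleftrightarrow>
     (\<forall>u u' r. cong_rels R (pt (\<pi> (u + u') r)) (\<lambda>q. pt (\<pi> u r) q + pt (\<pi> u' r) q)) \<and>
     (\<forall>c u r. cong_rels R (pt (\<pi> (sU c u) r)) (\<lambda>q. c * pt (\<pi> u r) q))"

lemma linear_slot_add:
  "linear_slot R sU \<pi> \<Longrightarrow> cong_rels R (pt (\<pi> (u + u') r)) (\<lambda>q. pt (\<pi> u r) q + pt (\<pi> u' r) q)"
  unfolding linear_slot_def by blast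

lemma linear_slot_scale:
  "linear_slot R sU \<pi> \<Longrightarrow> cong_rels R (pt (\<pi> (sU c u) r)) (\<lambda>q. c * pt (\<pi> u r) q)"
  unfolding linear_slot_def by blast

lemma linear_slot_zero:
  assumes "linear_slot R sU \<pi>"
  shows "cong_rels R (pt (\<pi> 0 r)) (\<lambda>q. 0)"
proof -
  have "(\<lambda>q. - 1 * (pt (\<pi> 0 r) q - (pt (\<pi> 0 r) q + pt (\<pi> 0 r) q))) \<in> lin_combs R"
    using linear_slot_add[OF assms, of 0 0 r] unfolding cong_rels_def by (intro lin_combs_scale) simp
  then show ?thesis unfolding cong_rels_def by simp
qed

lemma linear_slot_sum_list:
  assumes "linear_slot R sU \<pi>"
  shows "cong_rels R (pt (\<pi> (\<Sum>x\<leftarrow>xs. F x) r)) (\<lambda>q. \<Sum>x\<leftarrow>xs. pt (\<pi> (F x) r) q)"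
proof (induction xs)
  case Nil
  then show ?case using linear_slot_zero[OF assms] by simp
next
  case (Cons x xs)
  have "cong_rels R (pt (\<pi> (F x + (\<Sum>x\<leftarrow>xs. F x)) r))
      (\<lambda>q. pt (\<pi> (F x) r) q + pt (\<pi> (\<Sum>x\<leftarrow>xs. F x) r) q)"
    by (rule linear_slot_add[OF assms])
  also have "cong_rels R \<dots> (\<lambda>q. pt (\<pi> (F x) r) q + (\<Sum>x\<leftarrow>xs. pt (\<pi> (F x) r) q))"
    by (rule cong_rels_add[OF cong_rels_refl Cons.IH])
  finally show ?case by simp
qed

lemma linear_slot_bil_rels_left: "linear_slot (bil_rels sV sW) sV (\<lambda>v w. (v, w))"
  unfolding linear_slot_def cong_rels_def
  by (intro conjI allI; rule lin_combs_base; unfold bil_rels_def; fastforce simp: algebra_simps)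

lemma linear_slot_bil_rels_right: "linear_slot (bil_rels sV sW) sW (\<lambda>w v. (v, w))"
  unfolding linear_slot_def cong_rels_def
  by (intro conjI allI; rule lin_combs_base; unfold bil_rels_def; fastforce simp: algebra_simps)

lemma linear_slot_tril_rels_left: "linear_slot (tril_rels sU sV sW) sU (\<lambda>u (v, w). (u, v, w))"
  unfolding linear_slot_def cong_rels_def
  by (intro conjI allI; rule lin_combs_base; unfold tril_rels_def;
      fastforce simp: algebra_simps split: prod.splits)

lemma linear_slot_tril_rels_right: "linear_slot (tril_rels sU sV sW) sW (\<lambda>w (u, v). (u, v, w))"
  unfolding linear_slot_def cong_rels_def
  by (intro conjI allI; rule lin_combs_base; unfold tril_rels_def;
      fastforce simp: algebra_simps split: prod.splits)

definition finite_support :: "('p \<Rightarrow> 'k::field) \<Rightarrow> bool" where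
  "finite_support f \<longleftrightarrow> finite {p. f p \<noteq> 0}"

text \<open>The linear extension of \<open>F\<close> from the generators \<open>pt p\<close> to the free vector space;
  meaningless for functions of infinite support.\<close>
definition eval_free :: "('k::field \<Rightarrow> 'm::ab_group_add \<Rightarrow> 'm) \<Rightarrow> ('p \<Rightarrow> 'm) \<Rightarrow> ('p \<Rightarrow> 'k) \<Rightarrow> 'm" where
  "eval_free sM F f = (\<Sum>p | f p \<noteq> 0. sM (f p) (F p))"

lemma finite_support_add: "finite_support f \<Longrightarrow> finite_support g \<Longrightarrow> finite_support (\<lambda>q. f q + g q)"
  unfolding finite_support_def by (rule finite_subset[of _ "{p. f p \<noteq> 0} \<union> {p. g p \<noteq> 0}"]) auto

lemma finite_support_scale: "finite_support f \<Longrightarrow> finite_support (\<lambda>q. c * f q)"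
  unfolding finite_support_def by (rule finite_subset[of _ "{p. f p \<noteq> 0}"]) auto

lemma finite_support_pt: "finite_support (pt p)"
  unfolding finite_support_def by (rule finite_subset[of _ "{p}"]) (auto simp: pt_def)

context
  fixes sM :: "'k::field \<Rightarrow> 'm::ab_group_add \<Rightarrow> 'm" and F :: "'p \<Rightarrow> 'm"
  assumes vs: "vector_space sM"
begin

interpretation M: vector_space sM by (rule vs)

lemma eval_free_superset:
  "finite_support f \<Longrightarrow> finite S \<Longrightarrow> {p. f p \<noteq> 0} \<subseteq> S \<Longrightarrow> eval_free sM F f = (\<Sum>p\<in>S. sM (f p) (F p))"
  unfolding eval_free_def finite_support_def by (rule sum.mono_neutral_left) auto

lemma eval_free_add:
  assumes "finite_support f" "finite_support g"
  shows "eval_free sM F (\<lambda>q. f q + g q) = eval_free sM F f + eval_free sM F g"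
proof -
  let ?S = "{p. f p \<noteq> 0} \<union> {p. g p \<noteq> 0}"
  have fin: "finite ?S" using assms unfolding finite_support_def by simp
  have "eval_free sM F (\<lambda>q. f q + g q) = (\<Sum>p\<in>?S. sM (f p) (F p)) + (\<Sum>p\<in>?S. sM (g p) (F p))"
    using fin assms finite_support_add[OF assms]
    by (subst eval_free_superset) (auto simp: M.scale_left_distrib sum.distrib)
  also have "\<dots> = eval_free sM F f + eval_free sM F g"
    using fin assms by (simp add: eval_free_superset[of _ ?S])
  finally show ?thesis .
qed

lemma eval_free_scale:
  assumes "finite_support f"
  shows "eval_free sM F (\<lambda>q. c * f q) = sM c (eval_free sM F f)"
proof -
  have "eval_free sM F (\<lambda>q. c * f q) = (\<Sum>p | f p \<noteq> 0. sM (c * f p) (F p))"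
    using assms finite_support_scale[OF assms]
    by (subst eval_free_superset) (auto simp: finite_support_def)
  then show ?thesis by (simp add: eval_free_def M.scale_sum_right)
qed

lemma eval_free_formal_sum:
  "finite_support (\<lambda>q. \<Sum>(c, p)\<leftarrow>xs. c * pt p q) \<and>
   eval_free sM F (\<lambda>q. \<Sum>(c, p)\<leftarrow>xs. c * pt p q) = (\<Sum>(c, p)\<leftarrow>xs. sM c (F p))"
proof (induction xs)
  case Nil
  then show ?case by (simp add: eval_free_def finite_support_def)
next
  case (Cons x xs)
  obtain c p where x: "x = (c, p)" by fastforce
  have pt: "finite_support (\<lambda>q. c * pt p q)" "eval_free sM F (\<lambda>q. c * pt p q) = sM c (F p)"
    using eval_free_superset[of "pt p" "{p}"]
    by (auto simp: finite_support_scale finite_support_pt eval_free_scale) (simp add: pt_def)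
  show ?case
    using Cons pt finite_support_add[OF pt(1)] eval_free_add[OF pt(1)] by (simp add: x)
qed

lemma eval_free_lin_combs:
  assumes R: "\<And>r. r \<in> R \<Longrightarrow> finite_support r \<and> eval_free sM F r = 0" and f: "f \<in> lin_combs R"
  shows "eval_free sM F f = 0"
proof -
  obtain gs where gs: "set (map snd gs) \<subseteq> R" "f = (\<lambda>x. \<Sum>(c, g)\<leftarrow>gs. c * g x)"
    using f unfolding lin_combs_def by blast
  have "finite_support (\<lambda>x. \<Sum>(c, g)\<leftarrow>gs. c * g x) \<and> eval_free sM F (\<lambda>x. \<Sum>(c, g)\<leftarrow>gs. c * g x) = 0"
    using gs(1)
  proof (induction gs)
    case Nil
    then show ?case by (simp add: eval_free_def finite_support_def)
  next
    case (Cons x gs)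
    obtain c g where x: "x = (c, g)" by fastforce
    have g: "finite_support g" "eval_free sM F g = 0" using R Cons.prems x by auto
    show ?case
      using Cons g finite_support_add[OF finite_support_scale[OF g(1)]]
        eval_free_add[OF finite_support_scale[OF g(1)]] eval_free_scale[OF g(1)]
      by (simp add: x)
  qed
  then show ?thesis using gs by simp
qed

lemma eval_free_pt_diff3:
  "finite_support (\<lambda>q. pt p1 q - pt p2 q - pt p3 q :: 'k) \<and>
   eval_free sM F (\<lambda>q. pt p1 q - pt p2 q - pt p3 q) = F p1 - F p2 - F p3"
proof -
  have e: "(\<lambda>q. \<Sum>(c, p)\<leftarrow>[(1, p1), (-1, p2), (-1, p3)]. c * pt p q) = (\<lambda>q. pt p1 q - pt p2 q - pt p3 q)"
    by auto
  have v: "(\<Sum>(c, p)\<leftarrow>[(1, p1), (-1, p2), (-1, p3)]. sM c (F p)) = F p1 - F p2 - F p3"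
    by (simp add: M.scale_minus_left)
  show ?thesis
    using eval_free_formal_sum[of "[(1, p1), (-1, p2), (-1, p3)]"] unfolding e v .
qed

lemma eval_free_pt_diff2:
  "finite_support (\<lambda>q. pt p1 q - c * pt p2 q :: 'k) \<and>
   eval_free sM F (\<lambda>q. pt p1 q - c * pt p2 q) = F p1 - sM c (F p2)"
proof -
  have e: "(\<lambda>q. \<Sum>(c, p)\<leftarrow>[(1, p1), (-c, p2)]. c * pt p q) = (\<lambda>q. pt p1 q - c * pt p2 q)"
    by auto
  have v: "(\<Sum>(c, p)\<leftarrow>[(1, p1), (-c, p2)]. sM c (F p)) = F p1 - sM c (F p2)"
    by (simp add: M.scale_minus_left)
  show ?thesis
    using eval_free_formal_sum[of "[(1, p1), (-c, p2)]"] unfolding e v .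
qed

end

text \<open>The universal property of the tensor product, in the direction needed here.\<close>
lemma tensor2_zero_bilinear:
  assumes vs: "vector_space sU"
    and "\<And>v v' w. B (v + v') w = B v w + B v' w" "\<And>v w w'. B v (w + w') = B v w + B v w'"
    and "\<And>c v w. B (sV c v) w = sU c (B v w)" "\<And>c v w. B v (sW c w) = sU c (B v w)"
    and z: "tensor2_zero sV sW xs"
  shows "(\<Sum>(c, v, w)\<leftarrow>xs. sU c (B v w)) = 0"
proof -
  interpret U: vector_space sU by (rule vs)
  let ?F = "\<lambda>(v, w). B v w" and ?ys = "map (\<lambda>(c, v, w). (c, (v, w))) xs"
  have "finite_support r \<and> eval_free sU ?F r = 0" if "r \<in> bil_rels sV sW" for r
    using that assms(2-5) unfolding bil_rels_def
    by (auto simp: eval_free_pt_diff3[OF vs] eval_free_pt_diff2[OF vs])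
  then have "eval_free sU ?F (formal2 xs) = 0"
    using eval_free_lin_combs[OF vs] z unfolding tensor2_zero_def by blast
  moreover have "formal2 xs = (\<lambda>q. \<Sum>(c, p)\<leftarrow>?ys. c * pt p q)"
    unfolding formal2_def by (rule ext, induction xs) auto
  moreover have "(\<Sum>(c, p)\<leftarrow>?ys. sU c (?F p)) = (\<Sum>(c, v, w)\<leftarrow>xs. sU c (B v w))"
    by (induction xs) auto
  ultimately show ?thesis
    using eval_free_formal_sum[OF vs] by metis
qed

lemma tensor3_zero_trilinear:
  assumes vs: "vector_space sX"
    and "\<And>u u' v w. B (u + u') v w = B u v w + B u' v w"
    and "\<And>u v v' w. B u (v + v') w = B u v w + B u v' w"
    and "\<And>u v w w'. B u v (w + w') = B u v w + B u v w'"
    and "\<And>c u v w. B (sU c u) v w = sX c (B u v w)"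
    and "\<And>c u v w. B u (sV c v) w = sX c (B u v w)"
    and "\<And>c u v w. B u v (sW c w) = sX c (B u v w)"
    and z: "tensor3_zero sU sV sW xs"
  shows "(\<Sum>(c, u, v, w)\<leftarrow>xs. sX c (B u v w)) = 0"
proof -
  interpret X: vector_space sX by (rule vs)
  let ?F = "\<lambda>(u, v, w). B u v w" and ?ys = "map (\<lambda>(c, u, v, w). (c, (u, v, w))) xs"
  have "finite_support r \<and> eval_free sX ?F r = 0" if "r \<in> tril_rels sU sV sW" for r
    using that assms(2-7) unfolding tril_rels_def
    by (auto simp: eval_free_pt_diff3[OF vs] eval_free_pt_diff2[OF vs])
  then have "eval_free sX ?F (formal3 xs) = 0"
    using eval_free_lin_combs[OF vs] z unfolding tensor3_zero_def by blast
  moreover have "formal3 xs = (\<lambda>q. \<Sum>(c, p)\<leftarrow>?ys. c * pt p q)"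
    unfolding formal3_def by (rule ext, induction xs) auto
  moreover have "(\<Sum>(c, p)\<leftarrow>?ys. sX c (?F p)) = (\<Sum>(c, u, v, w)\<leftarrow>xs. sX c (B u v w))"
    by (induction xs) auto
  ultimately show ?thesis
    using eval_free_formal_sum[OF vs] by metis
qed

section \<open>Dual bases and normal forms of tensors\<close>

lemma k_lin_fun_add: "k_lin_fun sV l \<Longrightarrow> l (x + y) = l x + l y"
  unfolding k_lin_fun_def by blast

lemma k_lin_fun_scale: "k_lin_fun sV l \<Longrightarrow> l (sV c x) = c * l x"
  unfolding k_lin_fun_def by blast

lemma k_lin_fun_zero: "k_lin_fun sV l \<Longrightarrow> l 0 = 0"
  unfolding k_lin_fun_def by (metis add_cancel_left_left add_0)

lemma k_lin_fun_sum: "k_lin_fun sV l \<Longrightarrow> l (\<Sum>x\<in>A. f x) = (\<Sum>x\<in>A. l (f x))"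
  by (induction A rule: infinite_finite_induct) (simp_all add: k_lin_fun_zero k_lin_fun_add)

lemma ex_basis_list:
  assumes "vector_space s" "finite B" "module.span s B = UNIV"
  shows "\<exists>bs. basis_list s bs"
proof -
  interpret V: vector_space s by (rule assms(1))
  obtain I where I: "I \<subseteq> B" "V.independent I" "B \<subseteq> V.span I"
    using V.maximal_independent_subset[of B] by blast
  have "V.span I = UNIV"
    using assms(3) I(3) V.span_minimal[of B "V.span I"] V.subspace_span by blast
  moreover obtain bs where "set bs = I" "distinct bs"
    using finite_distinct_list[OF finite_subset[OF I(1) assms(2)]] by blast
  ultimately show ?thesis using I(2) unfolding basis_list_def by blast
qed

lemma ex_dual_basis:
  assumes "vector_space s" "basis_list s bs"
  shows "\<exists>cs. dual_basis s bs cs"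
proof -
  interpret V: vector_space s by (rule assms(1))
  have ind: "V.independent (set bs)" and span: "V.span (set bs) = UNIV" and dist: "distinct bs"
    using assms(2) unfolding basis_list_def by blast+
  let ?cs = "map (\<lambda>b x. V.representation (set bs) x b) bs"
  have "k_lin_fun s c" if "c \<in> set ?cs" for c
    using that V.representation_add[OF ind] V.representation_scale[OF ind] span
    unfolding k_lin_fun_def by auto
  moreover have "(?cs ! i) (bs ! j) = (if i = j then 1 else 0)"
    if "i < length bs" "j < length bs" for i j
    using that V.representation_basis[OF ind] dist by (simp add: nth_eq_iff_index_eq)
  ultimately show ?thesis unfolding dual_basis_def by (intro exI[of _ ?cs]) auto
qed

lemma dual_basis_expansion:
  assumes "vector_space s" "basis_list s bs" "dual_basis s bs cs"
  shows "x = (\<Sum>i<length bs. s ((cs ! i) x) (bs ! i))"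
proof -
  interpret V: vector_space s by (rule assms(1))
  have lin: "k_lin_fun s (cs ! i)" if "i < length bs" for i
    using assms(3) that unfolding dual_basis_def by (metis nth_mem)
  have dual: "(cs ! i) (bs ! j) = (if i = j then 1 else 0)" if "i < length bs" "j < length bs" for i j
    using assms(3) that unfolding dual_basis_def by blast
  have "x \<in> V.span (set bs)" "distinct bs" using assms(2) unfolding basis_list_def by blast+
  then obtain u where "x = (\<Sum>v\<in>set bs. s (u v) v)"
    using V.span_finite[of "set bs"] by auto
  then have u: "x = (\<Sum>j<length bs. s (u (bs ! j)) (bs ! j))"
    using \<open>distinct bs\<close> by (simp add: sum_list_distinct_conv_sum_set[symmetric] sum_list_sum_nth atLeast0LessThan)
  have "(cs ! i) x = u (bs ! i)" if i: "i < length bs" for i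
  proof -
    have "(cs ! i) x = (\<Sum>j<length bs. u (bs ! j) * (cs ! i) (bs ! j))"
      by (subst u) (simp add: k_lin_fun_sum[OF lin[OF i]] k_lin_fun_scale[OF lin[OF i]])
    also have "\<dots> = (\<Sum>j<length bs. if i = j then u (bs ! j) else 0)"
      by (rule sum.cong) (simp_all add: dual[OF i])
    also have "\<dots> = u (bs ! i)" using i by simp
    finally show ?thesis .
  qed
  then show ?thesis by (subst u) (intro sum.cong, auto)
qed

lemma dual_basis_coord_expansion:
  assumes "vector_space s" "basis_list s bs" "dual_basis s bs cs" "k_lin_fun s g"
  shows "g x = (\<Sum>i<length bs. g (bs ! i) * (cs ! i) x)"
  by (subst dual_basis_expansion[OF assms(1-3)])
     (simp add: k_lin_fun_sum[OF assms(4)] k_lin_fun_scale[OF assms(4)] mult.commute)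

text \<open>\<open>\<pi>1\<close> and \<open>\<pi>2\<close> address the same positions (by \<open>comp\<close>) through a factor of
  functionals and a factor \<open>M\<close>: expanding the functional along a dual basis moves its
  coordinates into \<open>M\<close>.\<close>
lemma linear_slot_expand:
  assumes s1: "linear_slot R fscale \<pi>1" and s2: "linear_slot R sM \<pi>2"
    and comp: "\<And>g m. \<pi>1 g (Ra m) = \<pi>2 m (Rb g)"
    and exp: "\<And>x. g x = (\<Sum>j<n. g (ps ! j) * (es ! j) x)"
  shows "cong_rels R (pt (\<pi>1 g (Ra m))) (\<lambda>q. \<Sum>j<n. pt (\<pi>1 (es ! j) (Ra (sM (g (ps ! j)) m))) q)"
proof -
  have g: "g = (\<Sum>j\<leftarrow>[0..<n]. fscale (g (ps ! j)) (es ! j))"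
    by (rule ext, subst exp, simp only: sum_list_apply)
       (simp add: fscale_def interv_sum_list_conv_sum_set_nat atLeast0LessThan)
  have "cong_rels R (pt (\<pi>1 g (Ra m)))
      (\<lambda>q. \<Sum>j\<leftarrow>[0..<n]. pt (\<pi>1 (fscale (g (ps ! j)) (es ! j)) (Ra m)) q)"
    by (subst g, rule linear_slot_sum_list[OF s1])
  also have "cong_rels R \<dots> (\<lambda>q. \<Sum>j\<leftarrow>[0..<n]. g (ps ! j) * pt (\<pi>1 (es ! j) (Ra m)) q)"
    by (intro cong_rels_sum_list linear_slot_scale[OF s1])
  also have "cong_rels R \<dots> (\<lambda>q. \<Sum>j\<leftarrow>[0..<n]. pt (\<pi>1 (es ! j) (Ra (sM (g (ps ! j)) m))) q)"
    unfolding comp by (intro cong_rels_sum_list cong_rels_sym[OF linear_slot_scale[OF s2]])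
  finally show ?thesis by (simp add: interv_sum_list_conv_sum_set_nat atLeast0LessThan)
qed

lemma linear_slot_expand_sum_list:
  assumes s1: "linear_slot R fscale \<pi>1" and s2: "linear_slot R sM \<pi>2"
    and comp: "\<And>g m. \<pi>1 g (Ra m) = \<pi>2 m (Rb g)"
    and exp: "\<And>x y. x \<in> set xs \<Longrightarrow> g x y = (\<Sum>j<n. g x (ps ! j) * (es ! j) y)"
  shows "cong_rels R (\<lambda>q. \<Sum>x\<leftarrow>xs. pt (\<pi>1 (g x) (Ra (m x))) q)
     (\<lambda>q. \<Sum>j<n. pt (\<pi>1 (es ! j) (Ra (\<Sum>x\<leftarrow>xs. sM (g x (ps ! j)) (m x)))) q)"
proof -
  have "cong_rels R (\<lambda>q. \<Sum>x\<leftarrow>xs. pt (\<pi>1 (g x) (Ra (m x))) q)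
     (\<lambda>q. \<Sum>x\<leftarrow>xs. \<Sum>j<n. pt (\<pi>1 (es ! j) (Ra (sM (g x (ps ! j)) (m x)))) q)"
    by (intro cong_rels_sum_list linear_slot_expand[OF s1 s2 comp] exp)
  also have "cong_rels R \<dots> (\<lambda>q. \<Sum>j<n. \<Sum>x\<leftarrow>xs. pt (\<pi>2 (sM (g x (ps ! j)) (m x)) (Rb (es ! j))) q)"
    by (rule cong_rels_ext) (simp add: sum_list_sum_swap comp)
  also have "cong_rels R \<dots> (\<lambda>q. \<Sum>j<n. pt (\<pi>2 (\<Sum>x\<leftarrow>xs. sM (g x (ps ! j)) (m x)) (Rb (es ! j))) q)"
    by (intro cong_rels_sum cong_rels_sym[OF linear_slot_sum_list[OF s2]])
  finally show ?thesis by (simp add: comp)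
qed

context
  fixes s :: "'k::field \<Rightarrow> 'v::ab_group_add \<Rightarrow> 'v" and bs cs
  assumes vs: "vector_space s" and basis: "basis_list s bs" and dual: "dual_basis s bs cs"
begin

lemma tensor2_normal_form:
  fixes sM :: "'k \<Rightarrow> 'm::ab_group_add \<Rightarrow> 'm"
  assumes "\<And>x. x \<in> set xs \<Longrightarrow> k_lin_fun s (g x)"
  shows "cong_rels (bil_rels fscale sM) (\<lambda>q. \<Sum>x\<leftarrow>xs. pt (g x, m x) q)
    (\<lambda>q. \<Sum>j<length bs. pt (cs ! j, \<Sum>x\<leftarrow>xs. sM (g x (bs ! j)) (m x)) q)"
  by (rule linear_slot_expand_sum_list[OF linear_slot_bil_rels_left linear_slot_bil_rels_right,
        where Ra = "\<lambda>m. m" and Rb = "\<lambda>g. g"])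
     (simp_all add: dual_basis_coord_expansion[OF vs basis dual] assms)

lemma tensor3_normal_form:
  fixes sM :: "'k \<Rightarrow> 'm::ab_group_add \<Rightarrow> 'm"
  assumes "\<And>x. x \<in> set xs \<Longrightarrow> k_lin_fun s (g x)"
  shows "cong_rels (tril_rels fscale fscale sM) (\<lambda>q. \<Sum>x\<leftarrow>xs. pt (g x, c, m x) q)
    (\<lambda>q. \<Sum>j<length bs. pt (cs ! j, c, \<Sum>x\<leftarrow>xs. sM (g x (bs ! j)) (m x)) q)"
proof -
  let ?\<pi> = "\<lambda>u (v, w). (u, v, w)"
  have "cong_rels (tril_rels fscale fscale sM) (\<lambda>q. \<Sum>x\<leftarrow>xs. pt (?\<pi> (g x) (c, m x)) q)
    (\<lambda>q. \<Sum>j<length bs. pt (?\<pi> (cs ! j) (c, \<Sum>x\<leftarrow>xs. sM (g x (bs ! j)) (m x))) q)"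
    by (rule linear_slot_expand_sum_list[OF linear_slot_tril_rels_left linear_slot_tril_rels_right,
          where Ra = "\<lambda>m. (c, m)" and Rb = "\<lambda>u. (u, c)"])
       (simp_all add: dual_basis_coord_expansion[OF vs basis dual] assms)
  then show ?thesis by simp
qed

end

section \<open>The isomorphism \<open>\<Upsilon>\<close> and the cotensor product\<close>

definition formal_tensor :: "(('v \<Rightarrow> 'k::field) \<times> 'm) list \<Rightarrow> ('v \<Rightarrow> 'k) \<times> 'm \<Rightarrow> 'k" where
  "formal_tensor xs = (\<lambda>q. \<Sum>(l, m)\<leftarrow>xs. pt (l, m) q)"

lemma tensor2_zero_diff_iff:
  "tensor2_zero sV sW ([(1, l, m). (l, m) \<leftarrow> xs] @ [(-1, l, m). (l, m) \<leftarrow> ys]) \<longleftrightarrow>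
   cong_rels (bil_rels sV sW) (formal_tensor xs) (formal_tensor ys)"
proof -
  have "formal2 ([(1, l, m). (l, m) \<leftarrow> xs] @ [(-1, l, m). (l, m) \<leftarrow> ys]) =
      (\<lambda>q. formal_tensor xs q - formal_tensor ys q)"
    unfolding formal2_def formal_tensor_def by (simp add: split_def sum_list_negf comp_def)
  then show ?thesis unfolding tensor2_zero_def cong_rels_def by simp
qed

locale dga_module =
  fixes sA :: "'k::field \<Rightarrow> 'a::ring_1 \<Rightarrow> 'a"
    and sW :: "'k \<Rightarrow> 'w::ab_group_add \<Rightarrow> 'w"
    and lm :: "'a \<Rightarrow> 'w \<Rightarrow> 'w" and rm :: "'w \<Rightarrow> 'a \<Rightarrow> 'w" and d :: "'a \<Rightarrow> 'w"
    and sM :: "'k \<Rightarrow> 'm::ab_group_add \<Rightarrow> 'm" and act :: "'m \<Rightarrow> 'a \<Rightarrow> 'm"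
    and as :: "'a list" and cs :: "('a \<Rightarrow> 'k) list"
    and ws :: "'w list" and es :: "('w \<Rightarrow> 'k) list"
  assumes algebra: "k_algebra sA"
    and basis_A: "basis_list sA as" and dual_A: "dual_basis sA as cs"
    and dga: "dga01 sA sW lm rm d"
    and basis_W: "basis_list sW ws" and dual_W: "dual_basis sW ws es"
    and module: "right_module sA sM act"
begin

sublocale A: vector_space sA using algebra unfolding k_algebra_def by blast
sublocale W: vector_space sW using dga unfolding dga01_def by blast
sublocale M: vector_space sM using module unfolding right_module_def by blast

lemma dga_rules:
  shows lm_add_left: "lm (a + b) w = lm a w + lm b w"
    and lm_add_right: "lm a (w + w') = lm a w + lm a w'"
    and rm_add_left: "rm (w + w') a = rm w a + rm w' a"
    and rm_add_right: "rm w (a + b) = rm w a + rm w b"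
    and rm_one: "rm w 1 = w"
    and lm_rm: "lm a (rm w b) = rm (lm a w) b"
    and lm_scale_left: "lm (sA c a) w = sW c (lm a w)"
    and lm_scale_right: "lm a (sW c w) = sW c (lm a w)"
    and rm_scale_left: "rm (sW c w) a = sW c (rm w a)"
    and rm_scale_right: "rm w (sA c a) = sW c (rm w a)"
    and d_add: "d (a + b) = d a + d b"
    and d_scale: "d (sA c a) = sW c (d a)"
  using dga unfolding dga01_def by simp_all

lemma module_rules:
  shows act_add_left: "act (m + m') a = act m a + act m' a"
    and act_add_right: "act m (a + b) = act m a + act m b"
    and act_one: "act m 1 = m"
    and act_scale_left: "act (sM c m) a = sM c (act m a)"
    and act_scale_right: "act m (sA c a) = sM c (act m a)"
  using module unfolding right_module_def by simp_all

lemma act_zero_right: "act m 0 = 0"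
  using act_add_right[of m 0 0] by simp

lemma rm_zero_right: "rm w 0 = 0"
  using rm_add_right[of w 0 0] by simp

lemma lm_zero_left: "lm 0 w = 0"
  using lm_add_left[of 0 0 w] by simp

lemma act_zero_left: "act 0 a = 0"
  using act_add_left[of 0 0 a] by simp

lemma act_minus_left: "act (- m) a = - act m a"
  using act_add_left[of "- m" m a] by (simp add: act_zero_left eq_neg_iff_add_eq_0)

lemma act_sum_list_left: "act (\<Sum>x\<leftarrow>xs. F x) a = (\<Sum>x\<leftarrow>xs. act (F x) a)"
  by (induction xs) (simp_all add: act_zero_left act_add_left)

lemma act_sum_right: "act m (\<Sum>i\<in>I. F i) = (\<Sum>i\<in>I. act m (F i))"
  by (induction I rule: infinite_finite_induct) (simp_all add: act_add_right act_zero_right)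

lemma rm_sum_right: "rm w (\<Sum>i\<in>I. F i) = (\<Sum>i\<in>I. rm w (F i))"
  by (induction I rule: infinite_finite_induct) (simp_all add: rm_add_right rm_zero_right)

lemma lm_sum_left: "lm (\<Sum>i\<in>I. F i) w = (\<Sum>i\<in>I. lm (F i) w)"
  by (induction I rule: infinite_finite_induct) (simp_all add: lm_add_left lm_zero_left)

lemma length_cs: "length cs = length as"
  using dual_A unfolding dual_basis_def by blast

lemma expansion_A: "a = (\<Sum>i<length as. sA ((cs ! i) a) (as ! i))"
  by (rule dual_basis_expansion[OF A.vector_space_axioms basis_A dual_A])

lemma expansion_W: "w = (\<Sum>j<length ws. sW ((es ! j) w) (ws ! j))"
  by (rule dual_basis_expansion[OF W.vector_space_axioms basis_W dual_W])

abbreviation Hom where "Hom \<equiv> homA rm act"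
abbreviation Cot where "Cot \<equiv> cotensor sW rm sM act as cs"
abbreviation \<Upsilon> where "\<Upsilon> \<equiv> Upsilon sM"

lemma homA_add: "f \<in> Hom \<Longrightarrow> f (x + y) = f x + f y"
  unfolding homA_def by blast

lemma homA_rm: "f \<in> Hom \<Longrightarrow> f (rm x a) = act (f x) a"
  unfolding homA_def by blast

lemma homA_scale: "f \<in> Hom \<Longrightarrow> f (sW c x) = sM c (f x)"
  using homA_rm[of f x "sA c 1"] by (simp add: rm_scale_right rm_one act_scale_right act_one)

lemma homA_sum: "f \<in> Hom \<Longrightarrow> f (\<Sum>i\<in>I. F i) = (\<Sum>i\<in>I. f (F i))"
  by (induction I rule: infinite_finite_induct) (auto simp: homA_add dest: homA_add[of f 0 0])

lemma homA_plus: "f \<in> Hom \<Longrightarrow> g \<in> Hom \<Longrightarrow> (\<lambda>w. f w + g w) \<in> Hom"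
  unfolding homA_def by (auto simp: act_add_left ac_simps)

lemma homA_smult: "f \<in> Hom \<Longrightarrow> (\<lambda>w. sM c (f w)) \<in> Hom"
  unfolding homA_def by (auto simp: act_scale_left M.scale_right_distrib)

lemma homA_lm: "f \<in> Hom \<Longrightarrow> (\<lambda>w. f (lm a w)) \<in> Hom"
  unfolding homA_def by (auto simp: lm_add_right lm_rm)

lemma homA_zero: "(\<lambda>w. 0) \<in> Hom"
  unfolding homA_def by (auto simp: act_zero_left)

definition linear_entries :: "(('w \<Rightarrow> 'k) \<times> 'm) list \<Rightarrow> bool" where
  "linear_entries xs \<longleftrightarrow> (\<forall>(l, m)\<in>set xs. k_lin_fun sW l)"

text \<open>The tensor \<open>\<Sum>\<^sub>j e\<^sup>j \<otimes> f(w\<^sub>j)\<close>, for the basis \<open>w\<^sub>j\<close> of \<open>\<Omega>\<^sup>1A\<close> and its dual basis \<open>e\<^sup>j\<close>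
  of \<open>L\<close>; it is the inverse image of \<open>f\<close> under \<open>\<Upsilon>\<close>.\<close>
definition hom_tensor :: "('w \<Rightarrow> 'm) \<Rightarrow> (('w \<Rightarrow> 'k) \<times> 'm) list" where
  "hom_tensor f = map (\<lambda>j. (es ! j, f (ws ! j))) [0..<length ws]"

definition tensor_scale :: "'k \<Rightarrow> (('w \<Rightarrow> 'k) \<times> 'm) list \<Rightarrow> (('w \<Rightarrow> 'k) \<times> 'm) list" where
  "tensor_scale c xs = map (\<lambda>(l, m). (l, sM c m)) xs"

text \<open>The right \<open>A\<close>-action \<open>(l a)(\<omega>) = l(a \<omega>)\<close> on the factor \<open>L\<close>.\<close>
definition tensor_act :: "(('w \<Rightarrow> 'k) \<times> 'm) list \<Rightarrow> 'a \<Rightarrow> (('w \<Rightarrow> 'k) \<times> 'm) list" where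
  "tensor_act xs a = map (\<lambda>(l, m). (\<lambda>w. l (lm a w), m)) xs"

lemma Upsilon_hom_tensor: "f \<in> Hom \<Longrightarrow> \<Upsilon> (hom_tensor f) = f"
proof
  fix w
  assume f: "f \<in> Hom"
  have "\<Upsilon> (hom_tensor f) w = (\<Sum>j<length ws. sM ((es ! j) w) (f (ws ! j)))"
    unfolding Upsilon_def hom_tensor_def by (simp add: interv_sum_list_conv_sum_set_nat atLeast0LessThan)
  also have "\<dots> = f (\<Sum>j<length ws. sW ((es ! j) w) (ws ! j))"
    using f by (simp add: homA_sum homA_scale)
  finally show "\<Upsilon> (hom_tensor f) w = f w"
    by (simp flip: expansion_W)
qed

lemma linear_entries_hom_tensor: "linear_entries (hom_tensor f)"
  using dual_W unfolding linear_entries_def hom_tensor_def dual_basis_def by auto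

lemma Upsilon_Nil: "\<Upsilon> [] = (\<lambda>w. 0)"
  unfolding Upsilon_def by simp

lemma Upsilon_append: "\<Upsilon> (xs @ ys) = (\<lambda>w. \<Upsilon> xs w + \<Upsilon> ys w)"
  unfolding Upsilon_def by simp

lemma Upsilon_concat: "\<Upsilon> (concat (map F [0..<n])) w = (\<Sum>i<n. \<Upsilon> (F i) w)"
  by (induction n) (simp_all add: Upsilon_append Upsilon_Nil)

lemma Upsilon_tensor_scale: "\<Upsilon> (tensor_scale c xs) = (\<lambda>w. sM c (\<Upsilon> xs w))"
proof
  fix w
  show "\<Upsilon> (tensor_scale c xs) w = sM c (\<Upsilon> xs w)"
    unfolding Upsilon_def tensor_scale_def
    by (induction xs) (auto simp: M.scale_right_distrib mult.commute)
qed

lemma Upsilon_tensor_act: "\<Upsilon> (tensor_act xs a) = (\<lambda>w. \<Upsilon> xs (lm a w))"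
  unfolding Upsilon_def tensor_act_def by (simp add: split_def comp_def)

lemma Upsilon_add: "linear_entries xs \<Longrightarrow> \<Upsilon> xs (x + y) = \<Upsilon> xs x + \<Upsilon> xs y"
  unfolding Upsilon_def linear_entries_def
  by (induction xs) (auto simp: k_lin_fun_add M.scale_left_distrib ac_simps)

lemma cotensor_linear_entries: "xs \<in> Cot \<Longrightarrow> linear_entries xs"
  unfolding cotensor_def linear_entries_def by blast

text \<open>The cotensor condition paired with \<open>\<omega> \<otimes> a\<close>, via the trilinear map
  \<open>(l, g, m) \<mapsto> l(\<omega>) g(a) m\<close>.\<close>
lemma cotensor_balance:
  assumes "xs \<in> Cot"
  shows "(\<Sum>(l, m)\<leftarrow>xs. \<Sum>i<length as. sM (l (rm w (as ! i)) * (cs ! i) a) m) =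
         (\<Sum>(l, m)\<leftarrow>xs. \<Sum>i<length as. sM (l w * (cs ! i) a) (act m (as ! i)))"
proof -
  have "tensor3_zero fscale fscale sM
      ([(1, (\<lambda>w. l (rm w a)), c, m). (l, m) \<leftarrow> xs, (a, c) \<leftarrow> zip as cs] @
       [(-1, l, c, act m a). (l, m) \<leftarrow> xs, (a, c) \<leftarrow> zip as cs])"
    using assms unfolding cotensor_def by blast
  from tensor3_zero_trilinear[OF M.vector_space_axioms _ _ _ _ _ _ this, of "\<lambda>l g m. sM (l w * g a) m"]
  have "(\<Sum>(c, l, g, m)\<leftarrow>[(1, (\<lambda>w. l (rm w a)), c, m). (l, m) \<leftarrow> xs, (a, c) \<leftarrow> zip as cs] @
       [(-1, l, c, act m a). (l, m) \<leftarrow> xs, (a, c) \<leftarrow> zip as cs]. sM c (sM (l w * g a) m)) = 0"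
    by (simp add: fscale_def algebra_simps M.scale_left_distrib M.scale_right_distrib)
  then show ?thesis
    by (simp add: sum_list_concat map_concat comp_def case_prod_beta sum_list_zip_nth length_cs
        sum_negf sum_list_negf split_def)
qed

lemma act_expansion: "act m a = (\<Sum>i<length as. sM ((cs ! i) a) (act m (as ! i)))"
proof -
  have "act m a = act m (\<Sum>i<length as. sA ((cs ! i) a) (as ! i))"
    by (simp flip: expansion_A)
  then show ?thesis by (simp add: act_sum_right act_scale_right)
qed

lemma Upsilon_cotensor_homA:
  assumes xs: "xs \<in> Cot"
  shows "\<Upsilon> xs \<in> Hom"
  unfolding homA_def
proof (intro CollectI conjI allI)
  fix x y
  show "\<Upsilon> xs (x + y) = \<Upsilon> xs x + \<Upsilon> xs y"
    by (rule Upsilon_add[OF cotensor_linear_entries[OF xs]])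
next
  fix w a
  have l_rm: "l (rm w a) = (\<Sum>i<length as. l (rm w (as ! i)) * (cs ! i) a)" if l: "k_lin_fun sW l" for l
  proof -
    have "l (rm w a) = l (rm w (\<Sum>i<length as. sA ((cs ! i) a) (as ! i)))"
      by (simp flip: expansion_A)
    then show ?thesis
      by (simp add: rm_sum_right rm_scale_right k_lin_fun_sum[OF l] k_lin_fun_scale[OF l] mult.commute)
  qed
  have "\<Upsilon> xs (rm w a) = (\<Sum>(l, m)\<leftarrow>xs. \<Sum>i<length as. sM (l (rm w (as ! i)) * (cs ! i) a) m)"
    unfolding Upsilon_def using cotensor_linear_entries[OF xs]
    by (intro sum_list_cong) (auto simp: linear_entries_def l_rm M.scale_sum_left)
  also have "\<dots> = (\<Sum>(l, m)\<leftarrow>xs. \<Sum>i<length as. sM (l w * (cs ! i) a) (act m (as ! i)))"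
    by (rule cotensor_balance[OF xs])
  also have "\<dots> = (\<Sum>(l, m)\<leftarrow>xs. sM (l w) (act m a))"
    by (intro sum_list_cong) (auto simp: act_expansion[of _ a] M.scale_sum_right mult.commute)
  also have "\<dots> = act (\<Upsilon> xs w) a"
    by (simp add: Upsilon_def act_sum_list_left act_scale_left split_def)
  finally show "\<Upsilon> xs (rm w a) = act (\<Upsilon> xs w) a" .
qed

lemma k_lin_fun_rm: "k_lin_fun sW l \<Longrightarrow> k_lin_fun sW (\<lambda>w. l (rm w a))"
  unfolding k_lin_fun_def by (simp add: rm_add_left rm_scale_left)

lemma k_lin_fun_lm: "k_lin_fun sW l \<Longrightarrow> k_lin_fun sW (\<lambda>w. l (lm a w))"
  unfolding k_lin_fun_def by (simp add: lm_add_right lm_scale_right)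

lemma cotensor_formal3:
  "formal3 ([(1, (\<lambda>w. l (rm w a)), c, m). (l, m) \<leftarrow> xs, (a, c) \<leftarrow> zip as cs] @
            [(-1, l, c, act m a). (l, m) \<leftarrow> xs, (a, c) \<leftarrow> zip as cs]) =
   (\<lambda>q. (\<Sum>(l, m)\<leftarrow>xs. \<Sum>i<length as. pt (\<lambda>w. l (rm w (as ! i)), cs ! i, m) q) -
        (\<Sum>(l, m)\<leftarrow>xs. \<Sum>i<length as. pt (l, cs ! i, act m (as ! i)) q))"
  unfolding formal3_def
  by (rule ext) (simp add: sum_list_concat map_concat comp_def case_prod_beta sum_list_zip_nth
      length_cs sum_negf sum_list_negf split_def)

text \<open>Both halves of the cotensor condition have the same normal form
  \<open>\<Sum>\<^sub>i\<^sub>,\<^sub>j e\<^sup>j \<otimes> c\<^sup>i \<otimes> f(w\<^sub>j a\<^sub>i)\<close> when \<open>f = \<Upsilon> xs\<close> is right \<open>A\<close>-linear.\<close>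
lemma homA_Upsilon_cotensor:
  assumes L: "linear_entries xs" and H: "\<Upsilon> xs \<in> Hom"
  shows "xs \<in> Cot"
proof -
  let ?R = "tril_rels fscale fscale sM :: (('w \<Rightarrow> 'k) \<times> ('a \<Rightarrow> 'k) \<times> 'm \<Rightarrow> 'k) set"
  define N :: "('w \<Rightarrow> 'k) \<times> ('a \<Rightarrow> 'k) \<times> 'm \<Rightarrow> 'k" where
    "N = (\<lambda>q. \<Sum>i<length as. \<Sum>j<length ws. pt (es ! j, cs ! i, \<Upsilon> xs (rm (ws ! j) (as ! i))) q)"
  note normal_form = tensor3_normal_form[OF W.vector_space_axioms basis_W dual_W]
  have lin: "\<And>x. x \<in> set xs \<Longrightarrow> k_lin_fun sW (fst x)"
    using L unfolding linear_entries_def by auto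
  have right_linear:
    "(\<Sum>x\<leftarrow>xs. sM (fst x w) (act (snd x) a)) = (\<Sum>x\<leftarrow>xs. sM (fst x (rm w a)) (snd x))" for w a
    using homA_rm[OF H, of w a] by (simp add: Upsilon_def act_sum_list_left act_scale_left split_def)
  have "cong_rels ?R (\<lambda>q. \<Sum>(l, m)\<leftarrow>xs. \<Sum>i<length as. pt (\<lambda>w. l (rm w (as ! i)), cs ! i, m) q)
      (\<lambda>q. \<Sum>i<length as. \<Sum>x\<leftarrow>xs. pt (\<lambda>w. fst x (rm w (as ! i)), cs ! i, snd x) q)"
    by (rule cong_rels_ext) (simp add: sum_list_sum_swap split_def)
  also have "cong_rels ?R \<dots> N"
    unfolding N_def Upsilon_def
    by (intro cong_rels_sum normal_form[THEN cong_rels_trans] k_lin_fun_rm lin)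
       (simp_all add: cong_rels_ext split_def)
  also have "cong_rels ?R N
      (\<lambda>q. \<Sum>i<length as. \<Sum>x\<leftarrow>xs. pt (fst x, cs ! i, act (snd x) (as ! i)) q)"
    unfolding N_def Upsilon_def
    by (intro cong_rels_sum cong_rels_sym[OF normal_form[THEN cong_rels_trans]] lin)
       (simp_all add: cong_rels_ext split_def right_linear)
  also have "cong_rels ?R \<dots> (\<lambda>q. \<Sum>(l, m)\<leftarrow>xs. \<Sum>i<length as. pt (l, cs ! i, act m (as ! i)) q)"
    by (rule cong_rels_ext) (simp add: sum_list_sum_swap split_def)
  finally have "tensor3_zero fscale fscale sM
      ([(1, (\<lambda>w. l (rm w a)), c, m). (l, m) \<leftarrow> xs, (a, c) \<leftarrow> zip as cs] @
       [(-1, l, c, act m a). (l, m) \<leftarrow> xs, (a, c) \<leftarrow> zip as cs])"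
    unfolding tensor3_zero_def cotensor_formal3 cong_rels_def .
  then show ?thesis
    using L unfolding cotensor_def linear_entries_def by blast
qed

lemma cotensor_Nil: "[] \<in> Cot"
  by (rule homA_Upsilon_cotensor) (simp_all add: Upsilon_Nil linear_entries_def homA_zero)

lemma cotensor_append:
  assumes "xs \<in> Cot" "ys \<in> Cot"
  shows "xs @ ys \<in> Cot"
proof (rule homA_Upsilon_cotensor)
  show "linear_entries (xs @ ys)"
    using assms[THEN cotensor_linear_entries] unfolding linear_entries_def by auto
  show "\<Upsilon> (xs @ ys) \<in> Hom"
    unfolding Upsilon_append by (intro homA_plus Upsilon_cotensor_homA assms)
qed

lemma cotensor_tensor_scale:
  assumes "xs \<in> Cot"
  shows "tensor_scale c xs \<in> Cot"
proof (rule homA_Upsilon_cotensor)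
  show "linear_entries (tensor_scale c xs)"
    using cotensor_linear_entries[OF assms] unfolding linear_entries_def tensor_scale_def by auto
  show "\<Upsilon> (tensor_scale c xs) \<in> Hom"
    unfolding Upsilon_tensor_scale by (intro homA_smult Upsilon_cotensor_homA assms)
qed

lemma cotensor_tensor_act:
  assumes "xs \<in> Cot"
  shows "tensor_act xs a \<in> Cot"
proof (rule homA_Upsilon_cotensor)
  show "linear_entries (tensor_act xs a)"
    using cotensor_linear_entries[OF assms] k_lin_fun_lm
    unfolding linear_entries_def tensor_act_def by auto
  show "\<Upsilon> (tensor_act xs a) \<in> Hom"
    unfolding Upsilon_tensor_act by (intro homA_lm Upsilon_cotensor_homA assms)
qed

lemma cotensor_hom_tensor: "f \<in> Hom \<Longrightarrow> hom_tensor f \<in> Cot"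
  by (rule homA_Upsilon_cotensor) (simp_all add: linear_entries_hom_tensor Upsilon_hom_tensor)

lemma formal_tensor_normal_form:
  assumes "linear_entries xs"
  shows "cong_rels (bil_rels fscale sM) (formal_tensor xs) (\<lambda>q. \<Sum>j<length ws. pt (es ! j, \<Upsilon> xs (ws ! j)) q)"
  using tensor2_normal_form[OF W.vector_space_axioms basis_W dual_W, of xs fst sM snd] assms
  unfolding formal_tensor_def Upsilon_def linear_entries_def by (simp add: split_def)

lemma tensor2_zero_diff_iff_Upsilon_eq:
  assumes "linear_entries xs" "linear_entries ys"
  shows "tensor2_zero fscale sM ([(1, l, m). (l, m) \<leftarrow> xs] @ [(-1, l, m). (l, m) \<leftarrow> ys])
    \<longleftrightarrow> \<Upsilon> xs = \<Upsilon> ys"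
proof
  assume z: "tensor2_zero fscale sM ([(1, l, m). (l, m) \<leftarrow> xs] @ [(-1, l, m). (l, m) \<leftarrow> ys])"
  show "\<Upsilon> xs = \<Upsilon> ys"
  proof
    fix w
    have "(\<Sum>(c, g, m)\<leftarrow>[(1, l, m). (l, m) \<leftarrow> xs] @ [(-1, l, m). (l, m) \<leftarrow> ys]. sM c (sM (g w) m)) = 0"
      by (rule tensor2_zero_bilinear[OF M.vector_space_axioms _ _ _ _ z])
         (simp_all add: fscale_def M.scale_left_distrib M.scale_right_distrib)
    then show "\<Upsilon> xs w = \<Upsilon> ys w"
      by (simp add: Upsilon_def split_def sum_list_negf comp_def)
  qed
next
  assume "\<Upsilon> xs = \<Upsilon> ys"
  then show "tensor2_zero fscale sM ([(1, l, m). (l, m) \<leftarrow> xs] @ [(-1, l, m). (l, m) \<leftarrow> ys])"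
    unfolding tensor2_zero_diff_iff
    using formal_tensor_normal_form[OF assms(1)] cong_rels_sym[OF formal_tensor_normal_form[OF assms(2)]]
    by (simp add: cong_rels_trans)
qed

section \<open>Hom-connections and comodule connections\<close>

abbreviation HC where "HC \<equiv> hom_connections lm rm d sM act"
abbreviation CC where "CC \<equiv> comodule_connections lm rm d sW sM act as cs"

text \<open>A representative of \<open>\<varrho>(N x) - \<Sum>\<^sub>s c\<^sup>s \<otimes> N(x a\<^sup>s) - (\<lambda> \<otimes> id)(x)\<close> in \<open>C \<otimes> M\<close>,
  whose vanishing is the connection condition.\<close>
definition connection_defect ::
  "((('w \<Rightarrow> 'k) \<times> 'm) list \<Rightarrow> 'm) \<Rightarrow> (('w \<Rightarrow> 'k) \<times> 'm) list \<Rightarrow> ('k \<times> ('a \<Rightarrow> 'k) \<times> 'm) list" where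
  "connection_defect N xs =
     [(1, c, act (N xs) a). (a, c) \<leftarrow> zip as cs] @
     [(-1, c, N (tensor_act xs a)). (a, c) \<leftarrow> zip as cs] @
     [(-1, (\<lambda>x. l (d x)), m). (l, m) \<leftarrow> xs]"

lemma comodule_connections_iff:
  "N \<in> CC \<longleftrightarrow>
     (\<forall>xs\<in>Cot. \<forall>ys\<in>Cot. \<Upsilon> xs = \<Upsilon> ys \<longrightarrow> N xs = N ys) \<and>
     (\<forall>xs\<in>Cot. \<forall>ys\<in>Cot. N (xs @ ys) = N xs + N ys) \<and>
     (\<forall>c. \<forall>xs\<in>Cot. N (tensor_scale c xs) = sM c (N xs)) \<and>
     (\<forall>xs\<in>Cot. tensor2_zero fscale sM (connection_defect N xs)) \<and>
     (\<forall>xs. xs \<notin> Cot \<longrightarrow> N xs = 0)"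
proof -
  have "tensor2_zero fscale sM ([(1, l, m). (l, m) \<leftarrow> xs] @ [(-1, l, m). (l, m) \<leftarrow> ys])
      \<longleftrightarrow> \<Upsilon> xs = \<Upsilon> ys" if "xs \<in> Cot" "ys \<in> Cot" for xs ys
    using that by (intro tensor2_zero_diff_iff_Upsilon_eq cotensor_linear_entries)
  then show ?thesis
    unfolding comodule_connections_def connection_defect_def tensor_act_def tensor_scale_def
    by blast
qed

lemma formal2_connection_defect:
  "formal2 (connection_defect N xs) =
   (\<lambda>q. (\<Sum>i<length as. pt (cs ! i, act (N xs) (as ! i)) q)
      - (\<Sum>i<length as. pt (cs ! i, N (tensor_act xs (as ! i))) q)
      - formal_tensor (map (\<lambda>(l, m). (\<lambda>x. l (d x), m)) xs) q)"
  unfolding formal2_def formal_tensor_def connection_defect_def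
  by (rule ext) (simp add: sum_list_concat map_concat comp_def case_prod_beta sum_list_zip_nth
      length_cs sum_negf sum_list_negf split_def)

lemma k_lin_fun_d: "k_lin_fun sW l \<Longrightarrow> k_lin_fun sA (\<lambda>x. l (d x))"
  unfolding k_lin_fun_def by (simp add: d_add d_scale)

lemma tensor2_zero_connection_defect:
  assumes xs: "xs \<in> Cot"
    and N: "\<And>i. i < length as \<Longrightarrow> N (tensor_act xs (as ! i)) = act (N xs) (as ! i) - \<Upsilon> xs (d (as ! i))"
  shows "tensor2_zero fscale sM (connection_defect N xs)"
proof -
  let ?R = "bil_rels fscale sM :: (('a \<Rightarrow> 'k) \<times> 'm \<Rightarrow> 'k) set"
  let ?dxs = "formal_tensor (map (\<lambda>(l, m). (\<lambda>x. l (d x), m)) xs)"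
  have "cong_rels ?R (\<lambda>q. \<Sum>i<length as. pt (cs ! i, act (N xs) (as ! i)) q)
      (\<lambda>q. \<Sum>i<length as. pt (cs ! i, N (tensor_act xs (as ! i)) + \<Upsilon> xs (d (as ! i))) q)"
    by (rule cong_rels_ext) (simp add: N)
  also have "cong_rels ?R \<dots> (\<lambda>q. (\<Sum>i<length as. pt (cs ! i, N (tensor_act xs (as ! i))) q)
      + (\<Sum>i<length as. pt (cs ! i, \<Upsilon> xs (d (as ! i))) q))"
    by (simp only: sum.distrib[symmetric])
       (intro cong_rels_sum linear_slot_add[OF linear_slot_bil_rels_right])
  also have "cong_rels ?R \<dots> (\<lambda>q. (\<Sum>i<length as. pt (cs ! i, N (tensor_act xs (as ! i))) q) + ?dxs q)"
  proof (rule cong_rels_add[OF cong_rels_refl cong_rels_sym])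
    have "\<And>x. x \<in> set xs \<Longrightarrow> k_lin_fun sA (\<lambda>y. fst x (d y))"
      using cotensor_linear_entries[OF xs] k_lin_fun_d unfolding linear_entries_def by auto
    then have "cong_rels ?R (\<lambda>q. \<Sum>x\<leftarrow>xs. pt (\<lambda>y. fst x (d y), snd x) q)
        (\<lambda>q. \<Sum>j<length as. pt (cs ! j, \<Sum>x\<leftarrow>xs. sM (fst x (d (as ! j))) (snd x)) q)"
      by (rule tensor2_normal_form[OF A.vector_space_axioms basis_A dual_A])
    then show "cong_rels ?R ?dxs (\<lambda>q. \<Sum>i<length as. pt (cs ! i, \<Upsilon> xs (d (as ! i))) q)"
      unfolding formal_tensor_def Upsilon_def by (simp add: split_def comp_def)
  qed
  finally show ?thesis
    unfolding tensor2_zero_def formal2_connection_defect cong_rels_def by (simp add: diff_diff_eq)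
qed

lemma connection_defect_eval:
  assumes "tensor2_zero fscale sM (connection_defect N xs)"
  shows "act (N xs) a = (\<Sum>i<length as. sM ((cs ! i) a) (N (tensor_act xs (as ! i)))) + \<Upsilon> xs (d a)"
proof -
  have "(\<Sum>(c, g, m)\<leftarrow>connection_defect N xs. sM c (sM (g a) m)) = 0"
    by (rule tensor2_zero_bilinear[OF M.vector_space_axioms _ _ _ _ assms])
       (simp_all add: fscale_def M.scale_left_distrib M.scale_right_distrib)
  then have "(\<Sum>i<length as. sM ((cs ! i) a) (act (N xs) (as ! i)))
      - (\<Sum>i<length as. sM ((cs ! i) a) (N (tensor_act xs (as ! i)))) - \<Upsilon> xs (d a) = 0"
    unfolding connection_defect_def Upsilon_def
    by (simp add: sum_list_concat map_concat comp_def case_prod_beta sum_list_zip_nth length_cs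
        sum_negf sum_list_negf split_def) (simp add: algebra_simps)
  then show ?thesis by (simp flip: act_expansion add: algebra_simps)
qed

lemma comodule_connection_concat:
  assumes N: "N \<in> CC" and F: "\<And>i. i < n \<Longrightarrow> F i \<in> Cot"
  shows "concat (map F [0..<n]) \<in> Cot \<and> N (concat (map F [0..<n])) = (\<Sum>i<n. N (F i))"
  using F
proof (induction n)
  case 0
  have "N [] = N [] + N []"
    using N cotensor_Nil unfolding comodule_connections_iff by (metis append_Nil)
  then show ?case using cotensor_Nil by simp
next
  case (Suc n)
  then show ?case
    using N cotensor_append unfolding comodule_connections_iff by simp
qed

lemma comodule_connection_tensor_act:
  assumes N: "N \<in> CC" and xs: "xs \<in> Cot"
  shows "N (tensor_act xs a) = act (N xs) a - \<Upsilon> xs (d a)"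
proof -
  have wd: "\<And>xs ys. xs \<in> Cot \<Longrightarrow> ys \<in> Cot \<Longrightarrow> \<Upsilon> xs = \<Upsilon> ys \<Longrightarrow> N xs = N ys"
    and scale: "\<And>c xs. xs \<in> Cot \<Longrightarrow> N (tensor_scale c xs) = sM c (N xs)"
    and defect: "tensor2_zero fscale sM (connection_defect N xs)"
    using N xs unfolding comodule_connections_iff by blast+
  \<comment> \<open>As tensors, \<open>x a = \<Sum>\<^sub>i c\<^sup>i(a) (x a\<^sub>i)\<close>; additivity of \<open>N\<close> then pulls the coordinates out.\<close>
  define F where "F i = tensor_scale ((cs ! i) a) (tensor_act xs (as ! i))" for i
  have F: "\<And>i. F i \<in> Cot"
    unfolding F_def by (intro cotensor_tensor_scale cotensor_tensor_act xs)
  have NF: "\<And>i. N (F i) = sM ((cs ! i) a) (N (tensor_act xs (as ! i)))"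
    unfolding F_def by (intro scale cotensor_tensor_act xs)
  have "\<Upsilon> (concat (map F [0..<length as])) w = \<Upsilon> (tensor_act xs a) w" for w
  proof -
    have "\<Upsilon> (concat (map F [0..<length as])) w = (\<Sum>i<length as. sM ((cs ! i) a) (\<Upsilon> xs (lm (as ! i) w)))"
      by (simp add: Upsilon_concat F_def Upsilon_tensor_scale Upsilon_tensor_act)
    also have "\<dots> = \<Upsilon> xs (lm (\<Sum>i<length as. sA ((cs ! i) a) (as ! i)) w)"
      using Upsilon_cotensor_homA[OF xs] by (simp add: homA_sum homA_scale lm_sum_left lm_scale_left)
    finally show ?thesis by (simp add: Upsilon_tensor_act flip: expansion_A)
  qed
  then have "N (tensor_act xs a) = N (concat (map F [0..<length as]))"
    using comodule_connection_concat[OF N F] by (intro wd cotensor_tensor_act xs ext) auto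
  also have "\<dots> = (\<Sum>i<length as. sM ((cs ! i) a) (N (tensor_act xs (as ! i))))"
    using comodule_connection_concat[OF N F] by (simp add: NF)
  finally show ?thesis
    using connection_defect_eval[OF defect, of a] by simp
qed

abbreviation \<Phi> where "\<Phi> \<equiv> hom_to_conn sW rm sM act as cs"

lemma hom_to_conn_cotensor: "xs \<in> Cot \<Longrightarrow> \<Phi> N0 xs = - N0 (\<Upsilon> xs)"
  unfolding hom_to_conn_def by simp

lemma hom_to_conn_mem:
  assumes N0: "N0 \<in> HC"
  shows "\<Phi> N0 \<in> CC"
proof -
  have add: "\<And>f g. f \<in> Hom \<Longrightarrow> g \<in> Hom \<Longrightarrow> N0 (\<lambda>w. f w + g w) = N0 f + N0 g"
    and scale: "\<And>c f. f \<in> Hom \<Longrightarrow> N0 (\<lambda>w. sM c (f w)) = sM c (N0 f)"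
    and leibniz: "\<And>f a. f \<in> Hom \<Longrightarrow> N0 (\<lambda>w. f (lm a w)) = act (N0 f) a + f (d a)"
    using N0 unfolding hom_connections_def by blast+
  show ?thesis
    unfolding comodule_connections_iff
  proof (intro conjI ballI allI impI)
    fix xs assume xs: "xs \<in> Cot"
    have "\<Phi> N0 (tensor_act xs a) = act (\<Phi> N0 xs) a - \<Upsilon> xs (d a)" for a
      using xs cotensor_tensor_act[OF xs] Upsilon_cotensor_homA[OF xs]
      by (simp add: hom_to_conn_cotensor Upsilon_tensor_act leibniz act_minus_left)
    then show "tensor2_zero fscale sM (connection_defect (\<Phi> N0) xs)"
      by (intro tensor2_zero_connection_defect xs)
  next
    fix xs ys assume "xs \<in> Cot" "ys \<in> Cot"
    then show "\<Phi> N0 (xs @ ys) = \<Phi> N0 xs + \<Phi> N0 ys"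
      by (simp add: hom_to_conn_cotensor cotensor_append Upsilon_append add Upsilon_cotensor_homA)
  next
    fix c xs assume "xs \<in> Cot"
    then show "\<Phi> N0 (tensor_scale c xs) = sM c (\<Phi> N0 xs)"
      by (simp add: hom_to_conn_cotensor cotensor_tensor_scale Upsilon_tensor_scale scale
          Upsilon_cotensor_homA)
  qed (auto simp: hom_to_conn_def)
qed

definition conn_to_hom :: "((('w \<Rightarrow> 'k) \<times> 'm) list \<Rightarrow> 'm) \<Rightarrow> ('w \<Rightarrow> 'm) \<Rightarrow> 'm" where
  "conn_to_hom N f = (if f \<in> Hom then - N (hom_tensor f) else 0)"

lemma conn_to_hom_hom_to_conn: "N0 \<in> HC \<Longrightarrow> conn_to_hom (\<Phi> N0) = N0"
  unfolding conn_to_hom_def hom_connections_def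
  by (auto simp: hom_to_conn_cotensor cotensor_hom_tensor Upsilon_hom_tensor)

lemma hom_to_conn_conn_to_hom:
  assumes N: "N \<in> CC"
  shows "\<Phi> (conn_to_hom N) = N"
proof
  fix xs
  have wd: "\<And>xs ys. xs \<in> Cot \<Longrightarrow> ys \<in> Cot \<Longrightarrow> \<Upsilon> xs = \<Upsilon> ys \<Longrightarrow> N xs = N ys"
    and out: "\<And>xs. xs \<notin> Cot \<Longrightarrow> N xs = 0"
    using N unfolding comodule_connections_iff by blast+
  show "\<Phi> (conn_to_hom N) xs = N xs"
  proof (cases "xs \<in> Cot")
    case True
    then show ?thesis
      using wd[OF cotensor_hom_tensor[OF Upsilon_cotensor_homA] True]
      by (simp add: hom_to_conn_cotensor conn_to_hom_def Upsilon_cotensor_homA Upsilon_hom_tensor)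
  qed (simp add: hom_to_conn_def out)
qed

lemma conn_to_hom_mem:
  assumes N: "N \<in> CC"
  shows "conn_to_hom N \<in> HC"
proof -
  have wd: "\<And>xs ys. xs \<in> Cot \<Longrightarrow> ys \<in> Cot \<Longrightarrow> \<Upsilon> xs = \<Upsilon> ys \<Longrightarrow> N xs = N ys"
    and add: "\<And>xs ys. xs \<in> Cot \<Longrightarrow> ys \<in> Cot \<Longrightarrow> N (xs @ ys) = N xs + N ys"
    and scale: "\<And>c xs. xs \<in> Cot \<Longrightarrow> N (tensor_scale c xs) = sM c (N xs)"
    using N unfolding comodule_connections_iff by blast+
  show ?thesis
    unfolding hom_connections_def
  proof (intro CollectI conjI ballI allI impI)
    fix f g assume f: "f \<in> Hom" and g: "g \<in> Hom"
    have "N (hom_tensor (\<lambda>w. f w + g w)) = N (hom_tensor f @ hom_tensor g)"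
      using f g by (intro wd cotensor_hom_tensor cotensor_append homA_plus)
        (simp_all add: Upsilon_hom_tensor Upsilon_append homA_plus)
    then show "conn_to_hom N (\<lambda>w. f w + g w) = conn_to_hom N f + conn_to_hom N g"
      using f g by (simp add: conn_to_hom_def homA_plus add cotensor_hom_tensor)
  next
    fix c f assume f: "f \<in> Hom"
    have "N (hom_tensor (\<lambda>w. sM c (f w))) = N (tensor_scale c (hom_tensor f))"
      using f by (intro wd cotensor_hom_tensor cotensor_tensor_scale homA_smult)
        (simp_all add: Upsilon_hom_tensor Upsilon_tensor_scale homA_smult)
    then show "conn_to_hom N (\<lambda>w. sM c (f w)) = sM c (conn_to_hom N f)"
      using f by (simp add: conn_to_hom_def homA_smult scale cotensor_hom_tensor)
  next
    fix f a assume f: "f \<in> Hom"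
    have "N (hom_tensor (\<lambda>w. f (lm a w))) = N (tensor_act (hom_tensor f) a)"
      using f by (intro wd cotensor_hom_tensor cotensor_tensor_act homA_lm)
        (simp_all add: Upsilon_hom_tensor Upsilon_tensor_act homA_lm)
    then show "conn_to_hom N (\<lambda>w. f (lm a w)) = act (conn_to_hom N f) a + f (d a)"
      using f comodule_connection_tensor_act[OF N cotensor_hom_tensor[OF f]]
      by (simp add: conn_to_hom_def homA_lm Upsilon_hom_tensor act_minus_left)
  qed (simp add: conn_to_hom_def)
qed

lemma bij_betw_hom_to_conn: "bij_betw \<Phi> HC CC"
  by (rule bij_betw_byWitness[where f' = conn_to_hom])
     (auto simp: conn_to_hom_hom_to_conn hom_to_conn_conn_to_hom hom_to_conn_mem conn_to_hom_mem)

end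

theorem mainTheorem1:
  fixes sA :: "'k::field \<Rightarrow> 'a::ring_1 \<Rightarrow> 'a"
    and sW :: "'k \<Rightarrow> 'w::ab_group_add \<Rightarrow> 'w"
    and lm :: "'a \<Rightarrow> 'w \<Rightarrow> 'w" and rm :: "'w \<Rightarrow> 'a \<Rightarrow> 'w" and d :: "'a \<Rightarrow> 'w"
    and sM :: "'k \<Rightarrow> 'm::ab_group_add \<Rightarrow> 'm" and act :: "'m \<Rightarrow> 'a \<Rightarrow> 'm"
    and as :: "'a list" and cs :: "('a \<Rightarrow> 'k) list"
  assumes "k_algebra sA"
    and "basis_list sA as"
    and "dual_basis sA as cs"
    and "dga01 sA sW lm rm d"
    and "\<exists>B. finite B \<and> module.span sW B = UNIV"
    and "right_module sA sM act"
  shows "bij_betw (hom_to_conn sW rm sM act as cs)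
           (hom_connections lm rm d sM act)
           (comodule_connections lm rm d sW sM act as cs)"
proof -
  have vs: "vector_space sW"
    using assms(4) unfolding dga01_def by blast
  obtain ws where ws: "basis_list sW ws"
    using ex_basis_list[OF vs] assms(5) by blast
  obtain es where es: "dual_basis sW ws es"
    using ex_dual_basis[OF vs ws] by blast
  interpret dga_module sA sW lm rm d sM act as cs ws es
    using assms ws es by unfold_locales
  show ?thesis
    by (rule bij_betw_hom_to_conn)
qed

end
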